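(* In the model described in the context, suppose $\triangle C>0$, and let $Q$ be the set of symmetric forward-market equilibria. Let $\zeta_1=(M+1)\triangle C+\min\big(MN\triangle C,\ MNk+2M\sqrt{Nk\triangle C}\big)$. Then there exists $(f,x)\in Q$ with $y_j(f\mathbf1,x\mathbf1)=0$ if and only if $\alpha_x\le\zeta_1$. Furthermore, if $\alpha_x>(M+1)\triangle C$, then there is $\bar f$ such that, for $(f,x)\in Q$, $y_j(f\mathbf1,x\mathbf1)=0$ if and only if \[(f,x)\in S:=\Big\{(f,x)\in\mathbb{R}\times\mathbb{R}_+:\ x=\tfrac1M(\alpha_x-(\triangle C-f)),\ 0\le f\le\bar f\Big\},\] and $S\subseteq Q$; moreover $\bar f>0$ if $\alpha_x<\zeta_1$.
   Context: Model: $M\ge1$ leaders and $N\ge2$ followers; inverse demand $P(q)=\alpha-\beta q$, $\alpha,\beta>0$; leader marginal cost $C$, follower marginal cost $c$, $c\ge C>0$; follower capacity $k>0$. Leader $i$ produces $x_i\ge0$; follower $j$ takes forward position $f_j\in\mathbb{R}$ and spot production $y_j\in[0,k]$. Given $\mathbf f,\mathbf x$, the spot market is the game among followers where follower $j$ chooses $y_j\in[0,k]$ to maximize $P(\sum_ix_i+\sum_{j'}y_{j'})(y_j-f_j)-cy_j$; its unique Nash equilibrium is $\mathbf y(\mathbf f,\mathbf x)=(y_1(\mathbf f,\mathbf x),\dots,y_N(\mathbf f,\mathbf x))$. Follower $j$'s forward payoff is $(P(\sum_ix_i+\sum_{j'}y_{j'}(\mathbf f,\mathbf x))-c)y_j(\mathbf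 f,\mathbf x)$, maximized over $f_j\in\mathbb{R}$; leader $i$'s payoff is $(P(\sum_ix_i+\sum_{j'}y_{j'}(\mathbf f,\mathbf x))-C)x_i$, maximized over $x_i\in\mathbb{R}_+$. A Nash equilibrium of the forward market is $(\mathbf f,\mathbf x)$ where no leader or follower can strictly gain by a unilateral deviation. $Q=\{(f,x)\in\mathbb{R}\times\mathbb{R}_+:(f\mathbf1,x\mathbf1)\text{ is a Nash equilibrium}\}$. $\alpha_x=(\alpha-C)/\beta$, $\triangle C=(c-C)/\beta$. *)

theory Defs
  imports Complex_Main
begin

text \<open>Leaders are indexed by i < M, followers by j < N. Profiles are functions
  nat \<Rightarrow> real; only the entries with index below M (resp. N) matter.\<close>

definition price :: "real \<Rightarrow> real \<Rightarrow> real \<Rightarrow> real" where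
  "price \<alpha> \<beta> q = \<alpha> - \<beta> * q"

definition spot_payoff ::
  "real \<Rightarrow> real \<Rightarrow> real \<Rightarrow> nat \<Rightarrow> real \<Rightarrow> (nat \<Rightarrow> real) \<Rightarrow> (nat \<Rightarrow> real) \<Rightarrow> nat \<Rightarrow> real" where
  "spot_payoff \<alpha> \<beta> c N X f y j =
     price \<alpha> \<beta> (X + (\<Sum>j'<N. y j')) * (y j - f j) - c * y j"

definition spot_NE ::
  "real \<Rightarrow> real \<Rightarrow> real \<Rightarrow> real \<Rightarrow> nat \<Rightarrow> real \<Rightarrow> (nat \<Rightarrow> real) \<Rightarrow> (nat \<Rightarrow> real) \<Rightarrow> bool" where
  "spot_NE \<alpha> \<beta> c k N X f y \<longleftrightarrow>
     (\<forall>j. N \<le> j \<longrightarrow> y j = 0) \<and>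
     (\<forall>j<N. 0 \<le> y j \<and> y j \<le> k \<and>
        (\<forall>z. 0 \<le> z \<and> z \<le> k \<longrightarrow>
           spot_payoff \<alpha> \<beta> c N X f (y(j := z)) j \<le> spot_payoff \<alpha> \<beta> c N X f y j))"

definition spot_eq ::
  "real \<Rightarrow> real \<Rightarrow> real \<Rightarrow> real \<Rightarrow> nat \<Rightarrow> nat \<Rightarrow> (nat \<Rightarrow> real) \<Rightarrow> (nat \<Rightarrow> real) \<Rightarrow> (nat \<Rightarrow> real)" where
  "spot_eq \<alpha> \<beta> c k M N f x = (THE y. spot_NE \<alpha> \<beta> c k N (\<Sum>i<M. x i) f y)"

definition total_output ::
  "real \<Rightarrow> real \<Rightarrow> real \<Rightarrow> real \<Rightarrow> nat \<Rightarrow> nat \<Rightarrow> (nat \<Rightarrow> real) \<Rightarrow> (nat \<Rightarrow> real) \<Rightarrow> real" where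
  "total_output \<alpha> \<beta> c k M N f x =
     (\<Sum>i<M. x i) + (\<Sum>j<N. spot_eq \<alpha> \<beta> c k M N f x j)"

definition follower_payoff ::
  "real \<Rightarrow> real \<Rightarrow> real \<Rightarrow> real \<Rightarrow> nat \<Rightarrow> nat \<Rightarrow> (nat \<Rightarrow> real) \<Rightarrow> (nat \<Rightarrow> real) \<Rightarrow> nat \<Rightarrow> real" where
  "follower_payoff \<alpha> \<beta> c k M N f x j =
     (price \<alpha> \<beta> (total_output \<alpha> \<beta> c k M N f x) - c) * spot_eq \<alpha> \<beta> c k M N f x j"

definition leader_payoff ::
  "real \<Rightarrow> real \<Rightarrow> real \<Rightarrow> real \<Rightarrow> real \<Rightarrow> nat \<Rightarrow> nat \<Rightarrow> (nat \<Rightarrow> real) \<Rightarrow> (nat \<Rightarrow> real) \<Rightarrow> nat \<Rightarrow> real" where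
  "leader_payoff \<alpha> \<beta> C c k M N f x i =
     (price \<alpha> \<beta> (total_output \<alpha> \<beta> c k M N f x) - C) * x i"

definition fwd_NE ::
  "real \<Rightarrow> real \<Rightarrow> real \<Rightarrow> real \<Rightarrow> real \<Rightarrow> nat \<Rightarrow> nat \<Rightarrow> (nat \<Rightarrow> real) \<Rightarrow> (nat \<Rightarrow> real) \<Rightarrow> bool" where
  "fwd_NE \<alpha> \<beta> C c k M N f x \<longleftrightarrow>
     (\<forall>i<M. 0 \<le> x i) \<and>
     (\<forall>j<N. \<forall>g::real.
        follower_payoff \<alpha> \<beta> c k M N (f(j := g)) x j \<le> follower_payoff \<alpha> \<beta> c k M N f x j) \<and>
     (\<forall>i<M. \<forall>z::real. 0 \<le> z \<longrightarrow>
        leader_payoff \<alpha> \<beta> C c k M N f (x(i := z)) i \<le> leader_payoff \<alpha> \<beta> C c k M N f x i)"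

definition symQ ::
  "real \<Rightarrow> real \<Rightarrow> real \<Rightarrow> real \<Rightarrow> real \<Rightarrow> nat \<Rightarrow> nat \<Rightarrow> (real \<times> real) set" where
  "symQ \<alpha> \<beta> C c k M N =
     {(f, x). 0 \<le> x \<and> fwd_NE \<alpha> \<beta> C c k M N (\<lambda>_. f) (\<lambda>_. x)}"

end

theory Submission
  imports Defs "HOL-Analysis.Analysis"
begin

text \<open>With the followers idle, a follower's forward position f only shifts the point at which
  it would start producing, which puts a kink into the leaders' residual demand.  When
  \<alpha>x \<le> (M + 1)\<triangle>C the leaders' Cournot outputs already leave the followers no positive
  margin.  Otherwise the leaders' Cournot first-order condition cannot hold on the idle side of
  the kink, so an idle equilibrium sits exactly on it, M x = \<alpha>x - (\<triangle>C - f).  There a leader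
  must not gain by contracting output and thereby inviting entry: against interior entry this
  means x \<le> (N + 1)(\<triangle>C - f), against capacity-constrained entry
  x \<le> (\<triangle>C - f) + N k + 2 \<surd>((\<triangle>C - f) N k).  Both conditions weaken as f
  decreases and are closed, so the admissible f form an interval [0, fbar], and at f = 0 they
  reduce to \<alpha>x \<le> \<zeta>1.\<close>

lemma sum_fun_upd:
  fixes y :: "'a \<Rightarrow> 'b::ab_group_add"
  assumes "finite S" "j \<in> S"
  shows "sum (y(j := z)) S = sum y S - y j + z"
proof -
  have "sum (y(j := z)) S = z + sum (y(j := z)) (S - {j})"
    using assms by (simp add: sum.remove)
  also have "sum (y(j := z)) (S - {j}) = sum y (S - {j})"
    by (rule sum.cong) auto
  finally show ?thesis
    using assms by (simp add: sum_diff1 algebra_simps)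
qed

text \<open>Marginal spot profit of follower j, divided by \<beta>.\<close>
definition spot_margin ::
  "real \<Rightarrow> real \<Rightarrow> real \<Rightarrow> nat \<Rightarrow> real \<Rightarrow> (nat \<Rightarrow> real) \<Rightarrow> (nat \<Rightarrow> real) \<Rightarrow> nat \<Rightarrow> real" where
  "spot_margin \<alpha> \<beta> c N X f y j = (\<alpha> - c) / \<beta> - X - sum y {..<N} + f j - y j"

definition spot_kkt ::
  "real \<Rightarrow> real \<Rightarrow> real \<Rightarrow> real \<Rightarrow> nat \<Rightarrow> real \<Rightarrow> (nat \<Rightarrow> real) \<Rightarrow> (nat \<Rightarrow> real) \<Rightarrow> bool" where
  "spot_kkt \<alpha> \<beta> c k N X f y \<longleftrightarrow> (\<forall>j. N \<le> j \<longrightarrow> y j = 0) \<and>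
     (\<forall>j<N. 0 \<le> y j \<and> y j \<le> k \<and>
       (0 < y j \<longrightarrow> 0 \<le> spot_margin \<alpha> \<beta> c N X f y j) \<and>
       (y j < k \<longrightarrow> spot_margin \<alpha> \<beta> c N X f y j \<le> 0))"

lemma spot_payoff_upd:
  assumes "\<beta> \<noteq> 0" "j < N"
  shows "spot_payoff \<alpha> \<beta> c N X f (y(j := z)) j - spot_payoff \<alpha> \<beta> c N X f y j
       = \<beta> * (spot_margin \<alpha> \<beta> c N X f y j * (z - y j) - (z - y j)\<^sup>2)"
proof -
  have sum_upd: "sum (y(j := z)) {..<N} = sum y {..<N} - y j + z"
    using assms by (intro sum_fun_upd) auto
  show ?thesis
    using assms(1) unfolding spot_payoff_def price_def spot_margin_def sum_upd
    by (simp add: field_simps power2_eq_square)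
qed

lemma margin_mult_nonpos:
  fixes k m y z :: real
  assumes "0 \<le> z" "z \<le> k" "0 < y \<longrightarrow> 0 \<le> m" "y < k \<longrightarrow> m \<le> 0"
  shows "m * (z - y) \<le> 0"
proof (cases "y \<le> z")
  case True
  then show ?thesis
    using assms by (cases "y = z") (auto intro: mult_nonpos_nonneg)
next
  case False
  then show ?thesis
    using assms by (auto intro: mult_nonneg_nonpos)
qed

lemma concave_quadratic_max_iff:
  fixes k m y :: real
  assumes "0 \<le> y" "y \<le> k"
  shows "(\<forall>z. 0 \<le> z \<and> z \<le> k \<longrightarrow> m * (z - y) - (z - y)\<^sup>2 \<le> 0)
     \<longleftrightarrow> (0 < y \<longrightarrow> 0 \<le> m) \<and> (y < k \<longrightarrow> m \<le> 0)"
proof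
  assume opt: "\<forall>z. 0 \<le> z \<and> z \<le> k \<longrightarrow> m * (z - y) - (z - y)\<^sup>2 \<le> 0"
  show "(0 < y \<longrightarrow> 0 \<le> m) \<and> (y < k \<longrightarrow> m \<le> 0)"
  proof (intro conjI impI; rule ccontr)
    assume "0 < y" "\<not> 0 \<le> m"
    define e where "e = min y (- m / 2)"
    have e: "0 < e" "e \<le> y" "e \<le> - m / 2"
      using \<open>0 < y\<close> \<open>\<not> 0 \<le> m\<close> by (auto simp: e_def)
    have "0 < e * (- m - e)"
      using e by (intro mult_pos_pos) auto
    moreover have "m * (- e) - (- e)\<^sup>2 \<le> 0"
      using opt[rule_format, of "y - e"] e assms by simp
    ultimately show False
      by (simp add: power2_eq_square algebra_simps)
  next
    assume "y < k" "\<not> m \<le> 0"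
    define e where "e = min (k - y) (m / 2)"
    have e: "0 < e" "e \<le> k - y" "e \<le> m / 2"
      using \<open>y < k\<close> \<open>\<not> m \<le> 0\<close> by (auto simp: e_def min_def)
    have "0 < e * (m - e)"
      using e by (intro mult_pos_pos) auto
    moreover have "m * e - e\<^sup>2 \<le> 0"
      using opt[rule_format, of "y + e"] e assms by simp
    ultimately show False
      by (simp add: power2_eq_square algebra_simps)
  qed
next
  assume "(0 < y \<longrightarrow> 0 \<le> m) \<and> (y < k \<longrightarrow> m \<le> 0)"
  then show "\<forall>z. 0 \<le> z \<and> z \<le> k \<longrightarrow> m * (z - y) - (z - y)\<^sup>2 \<le> 0"
    using margin_mult_nonpos by (smt (verit) zero_le_power2)
qed

lemma spot_NE_iff_kkt:
  assumes "0 < \<beta>"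
  shows "spot_NE \<alpha> \<beta> c k N X f y \<longleftrightarrow> spot_kkt \<alpha> \<beta> c k N X f y"
proof -
  have no_gain: "spot_payoff \<alpha> \<beta> c N X f (y(j := z)) j \<le> spot_payoff \<alpha> \<beta> c N X f y j
      \<longleftrightarrow> spot_margin \<alpha> \<beta> c N X f y j * (z - y j) - (z - y j)\<^sup>2 \<le> 0" if "j < N" for j z
    using spot_payoff_upd[of \<beta> j N \<alpha> c X f y z] assms that
    by (smt (verit) mult_le_0_iff)
  have "(0 \<le> y j \<and> y j \<le> k \<and>
      (\<forall>z. 0 \<le> z \<and> z \<le> k \<longrightarrow> spot_payoff \<alpha> \<beta> c N X f (y(j := z)) j \<le> spot_payoff \<alpha> \<beta> c N X f y j))
    \<longleftrightarrow> (0 \<le> y j \<and> y j \<le> k \<and>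
      (0 < y j \<longrightarrow> 0 \<le> spot_margin \<alpha> \<beta> c N X f y j) \<and> (y j < k \<longrightarrow> spot_margin \<alpha> \<beta> c N X f y j \<le> 0))"
    if "j < N" for j
    using concave_quadratic_max_iff[of "y j" k] by (auto simp: no_gain[OF that])
  then show ?thesis
    unfolding spot_NE_def spot_kkt_def by simp
qed

text \<open>Adding the variational inequalities of two solutions y, y' gives
  (\<Sum>\<delta>)^2 + \<Sum>\<delta>^2 \<le> 0 for \<delta> = y - y'.\<close>
lemma spot_kkt_unique:
  assumes "spot_kkt \<alpha> \<beta> c k N X f y" "spot_kkt \<alpha> \<beta> c k N X f y'"
  shows "y = y'"
proof -
  let ?m = "spot_margin \<alpha> \<beta> c N X f"
  have vi: "?m y j * (y' j - y j) \<le> 0"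
    if "j < N" "spot_kkt \<alpha> \<beta> c k N X f y" "spot_kkt \<alpha> \<beta> c k N X f y'" for j y y'
    using that by (intro margin_mult_nonpos) (auto simp: spot_kkt_def)
  define \<delta> where "\<delta> = (\<lambda>j. y j - y' j)"
  have "(\<Sum>j<N. (?m y j - ?m y' j) * (y' j - y j)) \<le> 0"
  proof (rule sum_nonpos)
    fix j assume "j \<in> {..<N}"
    then have "?m y j * (y' j - y j) + ?m y' j * (y j - y' j) \<le> 0"
      using vi[of j y y'] vi[of j y' y] assms by (simp add: add_nonpos_nonpos)
    then show "(?m y j - ?m y' j) * (y' j - y j) \<le> 0"
      by (simp add: algebra_simps)
  qed
  also have "(\<Sum>j<N. (?m y j - ?m y' j) * (y' j - y j)) = (\<Sum>j<N. sum \<delta> {..<N} * \<delta> j + (\<delta> j)\<^sup>2)"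
    unfolding spot_margin_def \<delta>_def
    by (intro sum.cong) (auto simp: sum_subtractf algebra_simps power2_eq_square)
  also have "\<dots> = (sum \<delta> {..<N})\<^sup>2 + (\<Sum>j<N. (\<delta> j)\<^sup>2)"
    by (simp add: sum.distrib sum_distrib_left[symmetric] power2_eq_square)
  finally have "(\<Sum>j<N. (\<delta> j)\<^sup>2) \<le> 0"
    by (smt (verit) zero_le_power2)
  then have "\<forall>j<N. \<delta> j = 0"
    using sum_nonneg_eq_0_iff[of "{..<N}" "\<lambda>j. (\<delta> j)\<^sup>2"]
    by (smt (verit) finite_lessThan lessThan_iff sum_nonneg zero_le_power2 zero_eq_power2)
  moreover have "\<forall>j. N \<le> j \<longrightarrow> y j = y' j"
    using assms by (simp add: spot_kkt_def)
  ultimately show ?thesis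
    by (intro ext) (metis \<delta>_def eq_iff_diff_eq_0 not_less)
qed

lemma spot_eq_eqI:
  assumes "0 < \<beta>" "spot_kkt \<alpha> \<beta> c k N (\<Sum>i<M. x i) f y"
  shows "spot_eq \<alpha> \<beta> c k M N f x = y"
  unfolding spot_eq_def
  using assms spot_kkt_unique spot_NE_iff_kkt[OF assms(1)] by (metis the_equality)

definition clip :: "real \<Rightarrow> real \<Rightarrow> real" where
  "clip k v = max 0 (min k v)"

lemma clip_nonneg: "0 \<le> clip k v"
  by (simp add: clip_def)

lemma clip_le: "0 \<le> k \<Longrightarrow> clip k v \<le> k"
  by (simp add: clip_def)

lemma clip_eq_0: "v \<le> 0 \<Longrightarrow> clip k v = 0"
  by (simp add: clip_def)

lemma clip_eq_0_iff: "0 < k \<Longrightarrow> clip k v = 0 \<longleftrightarrow> v \<le> 0"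
  by (auto simp: clip_def)

lemma clip_eq_self: "0 \<le> v \<Longrightarrow> v \<le> k \<Longrightarrow> clip k v = v"
  by (simp add: clip_def)

lemma clip_pos_imp_le: "0 < clip k v \<Longrightarrow> clip k v \<le> v"
  by (simp add: clip_def)

lemma clip_less_imp_ge: "clip k v < k \<Longrightarrow> v \<le> clip k v"
  by (auto simp: clip_def)

lemma clip_eq_bound: "0 \<le> k \<Longrightarrow> k \<le> v \<Longrightarrow> clip k v = k"
  by (simp add: clip_def)

lemma monopoly_gain_nonpos_iff:
  assumes "0 < k"
  shows "(\<forall>g. (e - clip k ((e + g) / 2)) * clip k ((e + g) / 2) \<le> 0) \<longleftrightarrow> e \<le> 0"
proof
  assume no_gain: "\<forall>g. (e - clip k ((e + g) / 2)) * clip k ((e + g) / 2) \<le> 0"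
  show "e \<le> 0"
  proof (rule ccontr)
    assume "\<not> e \<le> 0"
    define w where "w = min k (e / 2)"
    have w: "0 < w" "w \<le> k" "w \<le> e / 2"
      using \<open>\<not> e \<le> 0\<close> assms by (auto simp: w_def)
    have "clip k ((e + (2 * w - e)) / 2) = w"
      using w by (simp add: clip_eq_self)
    then have "(e - w) * w \<le> 0"
      using no_gain[rule_format, of "2 * w - e"] by simp
    moreover have "0 < (e - w) * w"
      using w by simp
    ultimately show False
      by simp
  qed
next
  assume "e \<le> 0"
  show "\<forall>g. (e - clip k ((e + g) / 2)) * clip k ((e + g) / 2) \<le> 0"
  proof
    fix g
    have "0 \<le> clip k ((e + g) / 2)"
      by (rule clip_nonneg)
    with \<open>e \<le> 0\<close> show "(e - clip k ((e + g) / 2)) * clip k ((e + g) / 2) \<le> 0"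
      by (intro mult_nonpos_nonneg) auto
  qed
qed

text \<open>A leader's no-deviation condition at a symmetric profile where followers are idle:
  u is the leader's residual-demand intercept at the equilibrium and p \<le> 0 the followers'
  spot margin there; a deviation from x to z shifts both by x - z.\<close>
definition leader_optimal :: "real \<Rightarrow> real \<Rightarrow> real \<Rightarrow> real \<Rightarrow> real \<Rightarrow> bool" where
  "leader_optimal n k p u x \<longleftrightarrow>
     (\<forall>z\<ge>0. (u + x - z - n * clip k ((p + x - z) / (n + 1))) * z \<le> u * x)"

lemma leader_optimalD:
  "leader_optimal n k p u x \<Longrightarrow> 0 \<le> z \<Longrightarrow>
    (u + x - z - n * clip k ((p + x - z) / (n + 1))) * z \<le> u * x"
  by (simp add: leader_optimal_def)

lemma leader_optimal_imp_le:
  assumes opt: "leader_optimal n k p u x" and "p \<le> 0" "0 \<le> x" "0 \<le> n"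
  shows "u \<le> x"
proof (rule ccontr)
  assume "\<not> u \<le> x"
  define \<epsilon> where "\<epsilon> = (u - x) / 2"
  have "0 < \<epsilon>"
    using \<open>\<not> u \<le> x\<close> by (simp add: \<epsilon>_def)
  have "clip k ((p + x - (x + \<epsilon>)) / (n + 1)) = 0"
    using \<open>p \<le> 0\<close> \<open>0 < \<epsilon>\<close> \<open>0 \<le> n\<close> by (intro clip_eq_0) (simp add: divide_nonpos_pos)
  moreover have "(u + x - (x + \<epsilon>) - n * clip k ((p + x - (x + \<epsilon>)) / (n + 1))) * (x + \<epsilon>) \<le> u * x"
    using \<open>0 \<le> x\<close> \<open>0 < \<epsilon>\<close> by (intro leader_optimalD[OF opt]) simp
  ultimately have "(u - \<epsilon>) * (x + \<epsilon>) \<le> u * x"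
    by simp
  moreover have "(u - \<epsilon>) * (x + \<epsilon>) = u * x + \<epsilon> * (u - x - \<epsilon>)"
    by (simp add: algebra_simps)
  moreover have "u - x - \<epsilon> = \<epsilon>"
    by (simp add: \<epsilon>_def field_simps)
  moreover have "0 < \<epsilon> * \<epsilon>"
    using \<open>0 < \<epsilon>\<close> by simp
  ultimately show False
    by simp
qed

text \<open>Below a strictly idle kink the leader faces linear demand, so local optimality
  is the Cournot first-order condition.\<close>
lemma leader_optimal_imp_ge:
  assumes opt: "leader_optimal n k p u x" and "p < 0" "0 < x" "0 \<le> n"
  shows "x \<le> u"
proof (rule ccontr)
  assume "\<not> x \<le> u"
  define \<epsilon> where "\<epsilon> = min (min x (- p)) (x - u) / 2"
  have \<epsilon>: "0 < \<epsilon>" "\<epsilon> \<le> x" "\<epsilon> \<le> - p / 2" "\<epsilon> \<le> (x - u) / 2"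
    using \<open>\<not> x \<le> u\<close> \<open>p < 0\<close> \<open>0 < x\<close> by (auto simp: \<epsilon>_def)
  have "clip k ((p + x - (x - \<epsilon>)) / (n + 1)) = 0"
    using \<epsilon> \<open>0 \<le> n\<close> by (intro clip_eq_0) (simp add: divide_nonpos_pos)
  moreover have "(u + x - (x - \<epsilon>) - n * clip k ((p + x - (x - \<epsilon>)) / (n + 1))) * (x - \<epsilon>) \<le> u * x"
    using \<epsilon> by (intro leader_optimalD[OF opt]) simp
  ultimately have "(u + \<epsilon>) * (x - \<epsilon>) \<le> u * x"
    by simp
  moreover have "\<epsilon> * \<epsilon> \<le> \<epsilon> * (x - u - \<epsilon>)"
    using \<epsilon> by (intro mult_left_mono) auto
  moreover have "0 < \<epsilon> * \<epsilon>"
    using \<epsilon> by simp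
  ultimately show False
    by (simp add: algebra_simps)
qed

lemma sq_le_four_mult_iff:
  fixes u x K :: real
  assumes "0 \<le> u" "u \<le> x" "0 \<le> K" "0 \<le> x + u - K"
  shows "(x + u - K)\<^sup>2 \<le> 4 * u * x \<longleftrightarrow> x \<le> u + K + 2 * sqrt (u * K)"
proof -
  define p q r where "p = sqrt u" and "q = sqrt K" and "r = sqrt x"
  have nonneg: "0 \<le> p" "0 \<le> q" "0 \<le> r" "p \<le> r"
    using assms by (auto simp: p_def q_def r_def real_sqrt_le_mono)
  have sq: "u = p\<^sup>2" "K = q\<^sup>2" "x = r\<^sup>2" "sqrt (u * K) = p * q"
    using assms by (simp_all add: p_def q_def r_def real_sqrt_mult)
  have "(x + u - K)\<^sup>2 \<le> 4 * u * x \<longleftrightarrow> (x + u - K)\<^sup>2 \<le> (2 * r * p)\<^sup>2"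
    by (simp add: sq power_mult_distrib mult_ac)
  also have "\<dots> \<longleftrightarrow> x + u - K \<le> 2 * r * p"
    using assms nonneg by (intro power_mono_iff) auto
  also have "\<dots> \<longleftrightarrow> (r - p)\<^sup>2 \<le> q\<^sup>2"
    by (simp add: sq power2_eq_square algebra_simps)
  also have "\<dots> \<longleftrightarrow> r - p \<le> q"
    using nonneg by (intro power_mono_iff) auto
  also have "\<dots> \<longleftrightarrow> r\<^sup>2 \<le> (p + q)\<^sup>2"
    using nonneg by (subst power_mono_iff) auto
  also have "\<dots> \<longleftrightarrow> x \<le> u + K + 2 * sqrt (u * K)"
    unfolding sq(4) by (simp add: sq(1-3) power2_eq_square algebra_simps)
  finally show ?thesis .
qed

lemma contraction_bound_imp_le_entry:
  fixes k n u x :: real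
  assumes dev: "\<And>t. t \<le> x \<Longrightarrow> (u + t - n * clip k (t / (n + 1))) * (x - t) \<le> u * x"
    and "0 < k" "0 \<le> n" "0 < x"
  shows "x \<le> (n + 1) * u"
proof (rule ccontr)
  assume "\<not> x \<le> (n + 1) * u"
  define t where "t = min (min x ((n + 1) * k)) (x - (n + 1) * u) / 2"
  have "0 < (n + 1) * k"
    using assms(2,3) by simp
  then have t: "0 < t" "t \<le> x" "t \<le> (n + 1) * k" "t \<le> (x - (n + 1) * u) / 2"
    using \<open>\<not> x \<le> (n + 1) * u\<close> \<open>0 < x\<close> unfolding t_def by (simp_all add: min_def mult.commute)
  have "clip k (t / (n + 1)) = t / (n + 1)"
    using t \<open>0 \<le> n\<close> by (intro clip_eq_self) (auto simp: field_simps)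
  then have "(u + t - n * (t / (n + 1))) * (x - t) \<le> u * x"
    using dev[OF \<open>t \<le> x\<close>] by simp
  moreover have "(u + t - n * (t / (n + 1))) * (x - t) - u * x = t / (n + 1) * (x - (n + 1) * u - t)"
    using \<open>0 \<le> n\<close> by (simp add: field_simps)
  moreover have "0 < t / (n + 1) * (x - (n + 1) * u - t)"
    using t \<open>0 \<le> n\<close> by (intro mult_pos_pos) auto
  ultimately show False
    by simp
qed

text \<open>If the capacity bound fails, contracting to the point where the followers' joint entry
  saturates their capacity and beyond is profitable; the optimal such contraction is
  t = (x - u + n k) / 2.\<close>
lemma contraction_bound_imp_le_capacity:
  fixes k n u x :: real
  assumes dev: "\<And>t. t \<le> x \<Longrightarrow> (u + t - n * clip k (t / (n + 1))) * (x - t) \<le> u * x"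
    and "0 < k" "1 \<le> n" "0 < x" "u \<le> x" "x \<le> (n + 1) * u"
  shows "x \<le> u + n * k + 2 * sqrt (u * (n * k))"
proof (rule ccontr)
  assume "\<not> ?thesis"
  then have gt: "u + n * k + 2 * sqrt (u * (n * k)) < x"
    by simp
  have "0 < u"
    using assms(3-6) by (smt (verit) mult_nonneg_nonpos)
  have "(n + 1) * k < x"
  proof (rule ccontr)
    assume "\<not> (n + 1) * k < x"
    have "x \<le> u + n * k"
    proof (cases "u \<le> k")
      case True
      then have "n * u \<le> n * k"
        using \<open>1 \<le> n\<close> by (intro mult_left_mono) auto
      then show ?thesis
        using \<open>x \<le> (n + 1) * u\<close> by (simp add: algebra_simps)
    next
      case False
      then show ?thesis
        using \<open>\<not> (n + 1) * k < x\<close> by (simp add: algebra_simps)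
    qed
    then show False
      using gt \<open>0 < u\<close> \<open>0 < k\<close> \<open>1 \<le> n\<close> by (smt (verit) real_sqrt_ge_zero mult_nonneg_nonneg)
  qed
  have "k \<le> n * u"
  proof (rule ccontr)
    assume "\<not> k \<le> n * u"
    moreover have "u \<le> n * u"
      using \<open>0 < u\<close> \<open>1 \<le> n\<close> by simp
    ultimately have "(n + 1) * u < (n + 1) * k"
      using \<open>1 \<le> n\<close> by simp
    then show False
      using \<open>(n + 1) * k < x\<close> \<open>x \<le> (n + 1) * u\<close> by simp
  qed
  then have "k\<^sup>2 \<le> u * (n * k)"
    using \<open>0 < k\<close> by (simp add: power2_eq_square mult_right_mono algebra_simps)
  then have "k \<le> sqrt (u * (n * k))"
    using \<open>0 < k\<close> by (simp add: real_le_rsqrt)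
  define t where "t = (x - u + n * k) / 2"
  have "(n + 1) * k < t" "t \<le> x"
    using gt \<open>k \<le> sqrt (u * (n * k))\<close> \<open>(n + 1) * k < x\<close> \<open>u \<le> x\<close> \<open>0 < k\<close> \<open>0 < u\<close>
    by (auto simp: t_def algebra_simps)
  then have "clip k (t / (n + 1)) = k"
    using \<open>0 < k\<close> \<open>1 \<le> n\<close> by (intro clip_eq_bound) (auto simp: field_simps)
  then have "(u + t - n * k) * (x - t) \<le> u * x"
    using dev[OF \<open>t \<le> x\<close>] by simp
  moreover have "(u + t - n * k) * (x - t) = (x + u - n * k)\<^sup>2 / 4"
    by (simp add: t_def power2_eq_square field_simps)
  moreover have "\<not> (x + u - n * k)\<^sup>2 \<le> 4 * u * x"
    using sq_le_four_mult_iff[of u x "n * k"] gt \<open>0 < u\<close> \<open>u \<le> x\<close> \<open>0 < k\<close> \<open>1 \<le> n\<close>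
    by (smt (verit) mult_nonneg_nonneg real_sqrt_ge_zero)
  ultimately show False
    by simp
qed

lemma le_bounds_imp_contraction_bound:
  fixes k n u x t :: real
  assumes "0 < k" "0 \<le> n" "0 \<le> u" "u \<le> x" "x \<le> (n + 1) * u"
    and "x \<le> u + n * k + 2 * sqrt (u * (n * k))" and "t \<le> x"
  shows "(u + t - n * clip k (t / (n + 1))) * (x - t) \<le> u * x"
proof -
  consider "t \<le> 0" | "0 < t" "t / (n + 1) \<le> k" | "k < t / (n + 1)"
    by linarith
  then show ?thesis
  proof cases
    case 1
    then have "clip k (t / (n + 1)) = 0"
      using \<open>0 \<le> n\<close> by (intro clip_eq_0) (simp add: divide_nonpos_pos)
    moreover have "t * (x - u - t) \<le> 0"
      using 1 \<open>u \<le> x\<close> by (simp add: mult_nonpos_nonneg)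
    ultimately show ?thesis
      by (simp add: algebra_simps)
  next
    case 2
    then have "clip k (t / (n + 1)) = t / (n + 1)"
      using \<open>0 \<le> n\<close> by (intro clip_eq_self) auto
    moreover have "t / (n + 1) * (x - (n + 1) * u - t) \<le> 0"
      using 2 assms(2,5) by (intro mult_nonneg_nonpos) auto
    moreover have "(u + t - n * (t / (n + 1))) * (x - t) - u * x = t / (n + 1) * (x - (n + 1) * u - t)"
      using \<open>0 \<le> n\<close> by (simp add: field_simps)
    ultimately show ?thesis
      by simp
  next
    case 3
    then have "clip k (t / (n + 1)) = k"
      using \<open>0 < k\<close> by (intro clip_eq_bound) auto
    moreover have "4 * ((u + t - n * k) * (x - t)) \<le> (x + u - n * k)\<^sup>2"
      using sum_squares_ge_zero[of "u + t - n * k - (x - t)" 0]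
      by (simp add: power2_eq_square algebra_simps)
    moreover have "n * k \<le> x"
      using 3 \<open>t \<le> x\<close> \<open>0 \<le> n\<close> \<open>0 < k\<close> by (simp add: field_simps)
    then have "(x + u - n * k)\<^sup>2 \<le> 4 * u * x"
      using sq_le_four_mult_iff[of u x "n * k"] assms(1-4,6) by simp
    ultimately show ?thesis
      by simp
  qed
qed

lemma leader_optimal_0_iff:
  fixes k n u x :: real
  assumes "0 < k" "1 \<le> n" "0 < x" "u \<le> x"
  shows "leader_optimal n k 0 u x \<longleftrightarrow> x \<le> (n + 1) * u \<and> x \<le> u + n * k + 2 * sqrt (u * (n * k))"
proof
  assume opt: "leader_optimal n k 0 u x"
  have dev: "(u + t - n * clip k (t / (n + 1))) * (x - t) \<le> u * x" if "t \<le> x" for t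
    using leader_optimalD[OF opt, of "x - t"] that by simp
  have "x \<le> (n + 1) * u"
    using contraction_bound_imp_le_entry[OF dev] assms by simp
  then show "x \<le> (n + 1) * u \<and> x \<le> u + n * k + 2 * sqrt (u * (n * k))"
    using contraction_bound_imp_le_capacity[OF dev] assms by simp
next
  assume bounds: "x \<le> (n + 1) * u \<and> x \<le> u + n * k + 2 * sqrt (u * (n * k))"
  then have "0 \<le> u"
    using assms by (smt (verit) mult_nonneg_nonpos)
  show "leader_optimal n k 0 u x"
    unfolding leader_optimal_def
  proof (intro allI impI)
    fix z :: real
    assume "0 \<le> z"
    then show "(u + x - z - n * clip k ((0 + x - z) / (n + 1))) * z \<le> u * x"
      using le_bounds_imp_contraction_bound[of k n u x "x - z"] bounds assms \<open>0 \<le> u\<close>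
      by (simp add: algebra_simps)
  qed
qed

lemma leader_optimal_if_no_entry:
  fixes k n p u x :: real
  assumes "p + x \<le> 0" "0 \<le> n" "u = x \<or> x = 0 \<and> u \<le> 0"
  shows "leader_optimal n k p u x"
  unfolding leader_optimal_def
proof (intro allI impI)
  fix z :: real
  assume "0 \<le> z"
  then have "clip k ((p + x - z) / (n + 1)) = 0"
    using assms(1,2) by (intro clip_eq_0) (simp add: divide_nonpos_pos)
  moreover have "(u + x - z) * z \<le> u * x"
    using assms(3)
  proof
    assume "u = x"
    then show ?thesis
      using sum_squares_ge_zero[of "x - z" 0] by (simp add: power2_eq_square algebra_simps)
  next
    assume "x = 0 \<and> u \<le> 0"
    then show ?thesis
      using \<open>0 \<le> z\<close> by (simp add: mult_nonpos_nonneg)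
  qed
  ultimately show "(u + x - z - n * clip k ((p + x - z) / (n + 1))) * z \<le> u * x"
    by simp
qed

lemma closed_lower_set_eq_interval:
  fixes S :: "real set"
  assumes "closed S" "bdd_above S" "\<And>f. f \<in> S \<Longrightarrow> 0 \<le> f"
    and "\<And>f g. g \<in> S \<Longrightarrow> 0 \<le> f \<Longrightarrow> f \<le> g \<Longrightarrow> f \<in> S"
  shows "\<exists>b. \<forall>f. f \<in> S \<longleftrightarrow> 0 \<le> f \<and> f \<le> b"
proof (cases "S = {}")
  case True
  then show ?thesis
    by (intro exI[of _ "-1"]) auto
next
  case False
  then have "Sup S \<in> S"
    using assms(1,2) by (intro closed_contains_Sup)
  then show ?thesis
    using assms(2-4) by (intro exI[of _ "Sup S"]) (meson cSup_upper)
qed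

lemma all_less_const_iff:
  fixes N :: nat
  assumes "0 < N" "\<And>j. j < N \<Longrightarrow> P j \<longleftrightarrow> Q"
  shows "(\<forall>j<N. P j) \<longleftrightarrow> Q"
  using assms by blast

locale stackelberg_market =
  fixes \<alpha> \<beta> C c k :: real and M N :: nat
  assumes leaders: "1 \<le> M" and followers: "1 \<le> N"
    and \<beta>_pos: "0 < \<beta>" and k_pos: "0 < k" and C_less_c: "C < c"
begin

text \<open>aL and \<Delta>C are the paper's \<alpha>x and \<triangle>C; aF = aL - \<Delta>C is the demand intercept
  net of the followers' cost, in the same units of quantity.\<close>
definition aL :: real where "aL = (\<alpha> - C) / \<beta>"
definition \<Delta>C :: real where "\<Delta>C = (c - C) / \<beta>"
definition aF :: real where "aF = (\<alpha> - c) / \<beta>"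

lemma \<Delta>C_pos: "0 < \<Delta>C"
  using \<beta>_pos C_less_c by (simp add: \<Delta>C_def)

lemma aF_eq: "aF = aL - \<Delta>C"
  by (simp add: aF_def aL_def \<Delta>C_def diff_divide_distrib)

lemma price_minus_c: "price \<alpha> \<beta> q - c = \<beta> * (aF - q)"
  using \<beta>_pos by (simp add: price_def aF_def field_simps)

lemma price_minus_C: "price \<alpha> \<beta> q - C = \<beta> * (aL - q)"
  using \<beta>_pos by (simp add: price_def aL_def field_simps)

lemma spot_eq_symmetric:
  "spot_eq \<alpha> \<beta> c k M N (\<lambda>_. f) xs =
     (\<lambda>j. if j < N then clip k ((aF - sum xs {..<M} + f) / (real N + 1)) else 0)"
proof (rule spot_eq_eqI[OF \<beta>_pos])
  define w where "w = (aF - sum xs {..<M} + f) / (real N + 1)"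
  define y where "y = (\<lambda>j. if j < N then clip k w else (0::real))"
  have margin: "spot_margin \<alpha> \<beta> c N (sum xs {..<M}) (\<lambda>_. f) y j = (N + 1) * (w - clip k w)"
    if "j < N" for j
    using that by (simp add: spot_margin_def y_def w_def aF_def[symmetric] field_simps)
  show "spot_kkt \<alpha> \<beta> c k N (sum xs {..<M}) (\<lambda>_. f) y"
    unfolding spot_kkt_def
  proof (intro conjI allI impI)
    fix j
    assume "j < N"
    then show "0 \<le> y j" "y j \<le> k"
      using k_pos by (simp_all add: y_def clip_nonneg clip_le)
    show "0 \<le> spot_margin \<alpha> \<beta> c N (sum xs {..<M}) (\<lambda>_. f) y j" if "0 < y j"
      using that \<open>j < N\<close> clip_pos_imp_le[of k w] unfolding margin[OF \<open>j < N\<close>]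
      by (simp add: y_def)
    show "spot_margin \<alpha> \<beta> c N (sum xs {..<M}) (\<lambda>_. f) y j \<le> 0" if "y j < k"
      using that \<open>j < N\<close> clip_less_imp_ge[of k w] unfolding margin[OF \<open>j < N\<close>]
      by (simp add: y_def mult_nonneg_nonpos)
  qed (simp add: y_def)
qed

lemma spot_eq_single_deviation:
  assumes "j0 < N" and idle: "aF - sum xs {..<M} + f \<le> 0"
  shows "spot_eq \<alpha> \<beta> c k M N ((\<lambda>_. f)(j0 := g)) xs =
     (\<lambda>j. if j = j0 then clip k ((aF - sum xs {..<M} + g) / 2) else 0)"
proof (rule spot_eq_eqI[OF \<beta>_pos])
  define w where "w = (aF - sum xs {..<M} + g) / 2"
  define y where "y = (\<lambda>j. if j = j0 then clip k w else (0::real))"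
  have sum_y: "sum y {..<N} = clip k w"
    using \<open>j0 < N\<close> by (simp add: y_def)
  have margin: "spot_margin \<alpha> \<beta> c N (sum xs {..<M}) ((\<lambda>_. f)(j0 := g)) y j =
      (if j = j0 then 2 * (w - clip k w) else aF - sum xs {..<M} + f - clip k w)" for j
    unfolding spot_margin_def sum_y by (simp add: y_def w_def aF_def[symmetric])
  show "spot_kkt \<alpha> \<beta> c k N (sum xs {..<M}) ((\<lambda>_. f)(j0 := g)) y"
    unfolding spot_kkt_def margin
  proof (intro conjI allI impI)
    fix j
    assume "j < N"
    show "0 \<le> y j" "y j \<le> k"
      using k_pos by (simp_all add: y_def clip_nonneg clip_le)
    show "0 \<le> (if j = j0 then 2 * (w - clip k w) else aF - sum xs {..<M} + f - clip k w)"
      if "0 < y j"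
      using that clip_pos_imp_le[of k w] by (simp add: y_def split: if_splits)
    show "(if j = j0 then 2 * (w - clip k w) else aF - sum xs {..<M} + f - clip k w) \<le> 0"
      if "y j < k"
      using that idle clip_less_imp_ge[of k w] clip_nonneg[of k w] by (simp add: y_def split: if_splits)
  qed (use \<open>j0 < N\<close> in \<open>simp add: y_def\<close>)
qed

lemma follower_payoff_symmetric:
  fixes f x :: real
  shows "j < N \<Longrightarrow> follower_payoff \<alpha> \<beta> c k M N (\<lambda>_. f) (\<lambda>_. x) j
    = \<beta> * (aF - M * x - N * clip k ((aF - M * x + f) / (real N + 1))) * clip k ((aF - M * x + f) / (real N + 1))"
  by (simp add: follower_payoff_def total_output_def spot_eq_symmetric price_minus_c)

lemma follower_payoff_deviation:
  fixes f g x :: real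
  assumes "j < N" "aF - M * x + f \<le> 0"
  shows "follower_payoff \<alpha> \<beta> c k M N ((\<lambda>_. f)(j := g)) (\<lambda>_. x) j
    = \<beta> * (aF - M * x - clip k ((aF - M * x + g) / 2)) * clip k ((aF - M * x + g) / 2)"
  using assms spot_eq_single_deviation[of j "\<lambda>_. x" f g]
  by (simp add: follower_payoff_def total_output_def price_minus_c)

lemma leader_payoff_deviation:
  fixes f x z :: real
  shows "i < M \<Longrightarrow> leader_payoff \<alpha> \<beta> C c k M N (\<lambda>_. f) ((\<lambda>_. x)(i := z)) i
    = \<beta> * (aL - (M * x - x + z) - N * clip k ((aF - (M * x - x + z) + f) / (real N + 1))) * z"
proof -
  assume "i < M"
  then have "sum ((\<lambda>_. x)(i := z)) {..<M} = M * x - x + z"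
    by (subst sum_fun_upd) auto
  then show ?thesis
    by (simp add: leader_payoff_def total_output_def spot_eq_symmetric price_minus_C)
qed

lemma leader_payoff_symmetric:
  fixes f x :: real
  shows "i < M \<Longrightarrow> leader_payoff \<alpha> \<beta> C c k M N (\<lambda>_. f) (\<lambda>_. x) i
    = \<beta> * (aL - M * x - N * clip k ((aF - M * x + f) / (real N + 1))) * x"
proof -
  have "(\<lambda>_::nat. x)(i := x) = (\<lambda>_. x)"
    by (rule ext) simp
  then show "i < M \<Longrightarrow> ?thesis"
    using leader_payoff_deviation[of i f x x] by simp
qed

lemma leaders_pos: "0 < M"
  using leaders by simp

lemma followers_pos: "0 < N"
  using followers by simp

lemma mem_symQ_iff:
  "(f, x) \<in> symQ \<alpha> \<beta> C c k M N \<longleftrightarrow> 0 \<le> x \<and>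
    (\<forall>j<N. \<forall>g. follower_payoff \<alpha> \<beta> c k M N ((\<lambda>_. f)(j := g)) (\<lambda>_. x) j
                 \<le> follower_payoff \<alpha> \<beta> c k M N (\<lambda>_. f) (\<lambda>_. x) j) \<and>
    (\<forall>i<M. \<forall>z\<ge>0. leader_payoff \<alpha> \<beta> C c k M N (\<lambda>_. f) ((\<lambda>_. x)(i := z)) i
                  \<le> leader_payoff \<alpha> \<beta> C c k M N (\<lambda>_. f) (\<lambda>_. x) i)"
  using leaders by (auto simp: symQ_def fwd_NE_def)

lemma followers_no_gain_iff:
  fixes f x :: real
  assumes idle: "aF - M * x + f \<le> 0"
  shows "(\<forall>j<N. \<forall>g. follower_payoff \<alpha> \<beta> c k M N ((\<lambda>_. f)(j := g)) (\<lambda>_. x) j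
                   \<le> follower_payoff \<alpha> \<beta> c k M N (\<lambda>_. f) (\<lambda>_. x) j)
    \<longleftrightarrow> aF \<le> M * x"
proof -
  let ?w = "\<lambda>g. clip k ((aF - M * x + g) / 2)"
  have "clip k ((aF - M * x + f) / (real N + 1)) = 0"
    using idle by (intro clip_eq_0) (simp add: divide_nonpos_pos)
  then have no_gain: "follower_payoff \<alpha> \<beta> c k M N ((\<lambda>_. f)(j := g)) (\<lambda>_. x) j
                   \<le> follower_payoff \<alpha> \<beta> c k M N (\<lambda>_. f) (\<lambda>_. x) j
      \<longleftrightarrow> (aF - M * x - ?w g) * ?w g \<le> 0" if "j < N" for j g
    using that idle \<beta>_pos
    by (simp add: follower_payoff_symmetric follower_payoff_deviation mult.assoc mult_le_0_iff)
  have "(\<forall>j<N. \<forall>g. follower_payoff \<alpha> \<beta> c k M N ((\<lambda>_. f)(j := g)) (\<lambda>_. x) j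
                   \<le> follower_payoff \<alpha> \<beta> c k M N (\<lambda>_. f) (\<lambda>_. x) j)
    \<longleftrightarrow> (\<forall>g. (aF - M * x - ?w g) * ?w g \<le> 0)"
    by (rule all_less_const_iff[OF followers_pos]) (simp add: no_gain)
  also have "\<dots> \<longleftrightarrow> aF - M * x \<le> 0"
    by (rule monopoly_gain_nonpos_iff[OF k_pos])
  finally show ?thesis
    by simp
qed

lemma leaders_no_gain_iff:
  fixes f x :: real
  assumes idle: "aF - M * x + f \<le> 0"
  shows "(\<forall>i<M. \<forall>z\<ge>0. leader_payoff \<alpha> \<beta> C c k M N (\<lambda>_. f) ((\<lambda>_. x)(i := z)) i
                    \<le> leader_payoff \<alpha> \<beta> C c k M N (\<lambda>_. f) (\<lambda>_. x) i)
    \<longleftrightarrow> leader_optimal N k (aF - M * x + f) (aL - M * x) x"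
proof -
  let ?p = "aF - M * x + f" and ?u = "aL - M * x"
  have "clip k (?p / (real N + 1)) = 0"
    using idle by (intro clip_eq_0) (simp add: divide_nonpos_pos)
  then have sym: "leader_payoff \<alpha> \<beta> C c k M N (\<lambda>_. f) (\<lambda>_. x) i = \<beta> * (?u * x)" if "i < M" for i
    using leader_payoff_symmetric[OF that] by simp
  have "aL - (M * x - x + z) = ?u + x - z" and "aF - (M * x - x + z) + f = ?p + x - z" for z
    by simp_all
  then have dev: "leader_payoff \<alpha> \<beta> C c k M N (\<lambda>_. f) ((\<lambda>_. x)(i := z)) i
      = \<beta> * ((?u + x - z - N * clip k ((?p + x - z) / (real N + 1))) * z)" if "i < M" for i z
    using leader_payoff_deviation[OF that] by (simp only: mult.assoc)
  have "(\<forall>i<M. \<forall>z\<ge>0. leader_payoff \<alpha> \<beta> C c k M N (\<lambda>_. f) ((\<lambda>_. x)(i := z)) i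
                    \<le> leader_payoff \<alpha> \<beta> C c k M N (\<lambda>_. f) (\<lambda>_. x) i)
    \<longleftrightarrow> (\<forall>z\<ge>0. (?u + x - z - N * clip k ((?p + x - z) / (real N + 1))) * z \<le> ?u * x)"
    using \<beta>_pos by (intro all_less_const_iff[OF leaders_pos]) (simp add: sym dev)
  then show ?thesis
    unfolding leader_optimal_def .
qed

definition idle_eq :: "real \<Rightarrow> real \<Rightarrow> bool" where
  "idle_eq f x \<longleftrightarrow>
     (f, x) \<in> symQ \<alpha> \<beta> C c k M N \<and> (\<forall>j<N. spot_eq \<alpha> \<beta> c k M N (\<lambda>_. f) (\<lambda>_. x) j = 0)"

lemma idle_eq_iff:
  fixes f x :: real
  shows "idle_eq f x \<longleftrightarrow> 0 \<le> x \<and> aF - M * x + f \<le> 0 \<and> aF \<le> M * x \<and>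
     leader_optimal N k (aF - M * x + f) (aL - M * x) x"
proof -
  have "(\<forall>j<N. spot_eq \<alpha> \<beta> c k M N (\<lambda>_. f) (\<lambda>_. x) j = 0) \<longleftrightarrow> aF - M * x + f \<le> 0"
    using k_pos by (intro all_less_const_iff[OF followers_pos])
      (simp add: spot_eq_symmetric clip_eq_0_iff divide_le_0_iff add_pos_pos)
  then show ?thesis
    unfolding idle_eq_def mem_symQ_iff using followers_no_gain_iff leaders_no_gain_iff by blast
qed

lemma idle_eq_if_small:
  assumes "aL \<le> (real M + 1) * \<Delta>C"
  shows "idle_eq (- \<bar>aF\<bar>) (max 0 aL / (real M + 1))"
proof -
  define x where "x = max 0 aL / (real M + 1)"
  have "0 \<le> x"
    by (simp add: x_def)
  have "aF \<le> M * x"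
  proof (cases "aL \<le> 0")
    case True
    then show ?thesis
      using \<Delta>C_pos by (simp add: x_def aF_eq)
  next
    case False
    then have "aL - M * x = aL / (real M + 1)"
      by (simp add: x_def field_simps)
    moreover have "aL / (real M + 1) \<le> \<Delta>C"
      using assms by (simp add: pos_divide_le_eq mult.commute)
    ultimately show ?thesis
      by (simp add: aF_eq)
  qed
  moreover have "1 * x \<le> M * x"
    using leaders \<open>0 \<le> x\<close> by (intro mult_right_mono) auto
  then have "aF - M * x - \<bar>aF\<bar> + x \<le> 0"
    by simp
  moreover have "aL - M * x = x \<or> x = 0 \<and> aL - M * x \<le> 0"
    by (cases "aL \<le> 0") (simp_all add: x_def field_simps)
  ultimately show ?thesis
    unfolding idle_eq_iff x_def[symmetric] using \<open>0 \<le> x\<close>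
    by (simp add: leader_optimal_if_no_entry)
qed

text \<open>The two bounds say that a leader gains nothing by contracting output below the kink,
  whether the followers then enter with interior or with capacity output.\<close>
definition idle_forwards :: "real set" where
  "idle_forwards = {f. 0 \<le> f \<and> (aF + f) / M \<le> (real N + 1) * (\<Delta>C - f) \<and>
     (aF + f) / M \<le> (\<Delta>C - f) + N * k + 2 * sqrt ((\<Delta>C - f) * (N * k))}"

text \<open>When aL exceeds (M + 1)\<Delta>C the leaders' Cournot outputs would leave the followers a
  positive margin, so in an idle equilibrium the leaders sit exactly on the kink M x = aF + f.\<close>
lemma idle_eq_iff_large:
  fixes f x :: real
  assumes large: "(real M + 1) * \<Delta>C < aL"
  shows "idle_eq f x \<longleftrightarrow> M * x = aF + f \<and> f \<in> idle_forwards"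
proof
  assume "idle_eq f x"
  then have "0 \<le> x" and idle: "aF - M * x + f \<le> 0" and "aF \<le> M * x"
    and opt: "leader_optimal N k (aF - M * x + f) (aL - M * x) x"
    by (auto simp: idle_eq_iff)
  have "aL - M * x \<le> x"
    using leader_optimal_imp_le[OF opt idle \<open>0 \<le> x\<close>] by simp
  then have "(real M + 1) * \<Delta>C < (real M + 1) * x"
    using large by (simp add: algebra_simps)
  then have "0 < x"
    using \<Delta>C_pos mult_left_less_imp_less[of "M + 1" \<Delta>C x] by simp
  have kink: "M * x = aF + f"
  proof (rule ccontr)
    assume "M * x \<noteq> aF + f"
    then have "x \<le> aL - M * x"
      using leader_optimal_imp_ge[OF opt _ \<open>0 < x\<close>] idle by simp
    then have "x \<le> \<Delta>C"
      using \<open>aF \<le> M * x\<close> \<open>aL - M * x \<le> x\<close> by (simp add: aF_eq)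
    then have "(real M + 1) * x \<le> (real M + 1) * \<Delta>C"
      by (intro mult_left_mono) auto
    then show False
      using large \<open>aL - M * x \<le> x\<close> \<open>x \<le> aL - M * x\<close> by (simp add: algebra_simps)
  qed
  then have "0 \<le> f" "aL - M * x = \<Delta>C - f" "x = (aF + f) / M"
    using \<open>aF \<le> M * x\<close> leaders_pos by (auto simp: aF_eq field_simps)
  moreover have "leader_optimal N k 0 (\<Delta>C - f) x"
    using opt unfolding \<open>aL - M * x = \<Delta>C - f\<close> by (simp add: kink)
  ultimately show "M * x = aF + f \<and> f \<in> idle_forwards"
    using leader_optimal_0_iff[of k N x "\<Delta>C - f"] k_pos followers \<open>0 < x\<close> \<open>aL - M * x \<le> x\<close> kink
    by (simp add: idle_forwards_def)
next
  assume "M * x = aF + f \<and> f \<in> idle_forwards"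
  then have kink: "M * x = aF + f" and "0 \<le> f"
    and bounds: "x \<le> (real N + 1) * (\<Delta>C - f)" "x \<le> (\<Delta>C - f) + N * k + 2 * sqrt ((\<Delta>C - f) * (N * k))"
  proof -
    have "x = (aF + f) / M"
      using \<open>M * x = aF + f \<and> f \<in> idle_forwards\<close> leaders_pos by (simp add: field_simps)
    then show "M * x = aF + f" "0 \<le> f" "x \<le> (real N + 1) * (\<Delta>C - f)"
      "x \<le> (\<Delta>C - f) + N * k + 2 * sqrt ((\<Delta>C - f) * (N * k))"
      using \<open>M * x = aF + f \<and> f \<in> idle_forwards\<close> by (simp_all add: idle_forwards_def)
  qed
  have "M * \<Delta>C < aF"
    using large by (simp add: aF_eq algebra_simps)
  then have "M * \<Delta>C < M * x"
    using kink \<open>0 \<le> f\<close> by simp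
  then have "\<Delta>C < x"
    by (simp add: mult_less_cancel_left)
  then have "0 < x" "\<Delta>C - f \<le> x"
    using \<Delta>C_pos \<open>0 \<le> f\<close> by simp_all
  moreover have "leader_optimal N k 0 (\<Delta>C - f) x"
    using leader_optimal_0_iff[of k N x "\<Delta>C - f"] k_pos followers bounds \<open>0 < x\<close> \<open>\<Delta>C - f \<le> x\<close>
    by simp
  ultimately show "idle_eq f x"
    using kink \<open>0 \<le> f\<close> by (simp add: idle_eq_iff aF_eq)
qed

lemma idle_forwards_lower:
  assumes "g \<in> idle_forwards" "0 \<le> f" "f \<le> g"
  shows "f \<in> idle_forwards"
proof -
  have "(aF + f) / M \<le> (aF + g) / M"
    using assms(3) by (simp add: divide_right_mono)
  moreover have "(real N + 1) * (\<Delta>C - g) \<le> (real N + 1) * (\<Delta>C - f)"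
    using assms(3) by (intro mult_left_mono) auto
  moreover have "sqrt ((\<Delta>C - g) * (N * k)) \<le> sqrt ((\<Delta>C - f) * (N * k))"
    using assms(3) k_pos by (intro real_sqrt_le_mono mult_right_mono) auto
  ultimately show ?thesis
    using assms unfolding idle_forwards_def mem_Collect_eq by (intro conjI; linarith)
qed

lemma closed_idle_forwards: "closed idle_forwards"
  unfolding idle_forwards_def
  using leaders_pos by (intro closed_Collect_conj closed_Collect_le continuous_intros) auto

lemma idle_forwards_less:
  assumes "(real M + 1) * \<Delta>C < aL" "f \<in> idle_forwards"
  shows "f < \<Delta>C"
proof -
  have "0 \<le> f" and entry: "(aF + f) / M \<le> (real N + 1) * (\<Delta>C - f)"
    using assms(2) by (auto simp: idle_forwards_def)
  have "M * \<Delta>C < aF"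
    using assms(1) by (simp add: aF_eq algebra_simps)
  moreover have "0 \<le> M * \<Delta>C"
    using \<Delta>C_pos by simp
  ultimately have "0 < (aF + f) / M"
    using \<open>0 \<le> f\<close> leaders_pos by simp
  then have "0 < (real N + 1) * (\<Delta>C - f)"
    using entry by linarith
  then show ?thesis
    by (simp add: zero_less_mult_iff)
qed

definition zeta1 :: real where
  "zeta1 = (real M + 1) * \<Delta>C
     + min (real M * real N * \<Delta>C) (real M * real N * k + 2 * real M * sqrt (real N * k * \<Delta>C))"

lemma idle_forwards_slacks_0:
  "M * ((real N + 1) * \<Delta>C - aF / M) = (real M + 1) * \<Delta>C + real M * real N * \<Delta>C - aL"
  "M * (\<Delta>C + N * k + 2 * sqrt (\<Delta>C * (N * k)) - aF / M)
     = (real M + 1) * \<Delta>C + (real M * real N * k + 2 * real M * sqrt (real N * k * \<Delta>C)) - aL"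
proof -
  have "sqrt (\<Delta>C * (N * k)) = sqrt (real N * k * \<Delta>C)"
    by (simp add: mult_ac)
  then show "M * ((real N + 1) * \<Delta>C - aF / M) = (real M + 1) * \<Delta>C + real M * real N * \<Delta>C - aL"
    "M * (\<Delta>C + N * k + 2 * sqrt (\<Delta>C * (N * k)) - aF / M)
     = (real M + 1) * \<Delta>C + (real M * real N * k + 2 * real M * sqrt (real N * k * \<Delta>C)) - aL"
    using leaders_pos by (simp_all add: aF_eq field_simps)
qed

lemma zero_mem_idle_forwards_iff: "0 \<in> idle_forwards \<longleftrightarrow> aL \<le> zeta1"
proof -
  have "0 \<in> idle_forwards \<longleftrightarrow>
      0 \<le> M * ((real N + 1) * \<Delta>C - aF / M) \<and> 0 \<le> M * (\<Delta>C + N * k + 2 * sqrt (\<Delta>C * (N * k)) - aF / M)"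
    using leaders_pos by (simp add: idle_forwards_def zero_le_mult_iff)
  then show ?thesis
    unfolding idle_forwards_slacks_0 zeta1_def by linarith
qed

lemma idle_forwards_pos:
  assumes "aL < zeta1"
  shows "\<exists>f>0. f \<in> idle_forwards"
proof -
  define g1 where "g1 f = (real N + 1) * (\<Delta>C - f) - (aF + f) / M" for f
  define g2 where "g2 f = (\<Delta>C - f) + N * k + 2 * sqrt ((\<Delta>C - f) * (N * k)) - (aF + f) / M" for f
  have "M * g1 0 = (real M + 1) * \<Delta>C + real M * real N * \<Delta>C - aL"
    "M * g2 0 = (real M + 1) * \<Delta>C + (real M * real N * k + 2 * real M * sqrt (real N * k * \<Delta>C)) - aL"
    using idle_forwards_slacks_0 by (simp_all add: g1_def g2_def)
  then have "0 < M * g1 0" "0 < M * g2 0"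
    using assms unfolding zeta1_def by simp_all
  then have "0 < g1 0" "0 < g2 0"
    by (simp_all add: zero_less_mult_iff)
  moreover have "(g1 \<longlongrightarrow> g1 0) (at_right 0)" "(g2 \<longlongrightarrow> g2 0) (at_right 0)"
    unfolding g1_def g2_def by (intro tendsto_intros; use leaders_pos in simp)+
  ultimately have "\<forall>\<^sub>F f in at_right 0. 0 < g1 f \<and> 0 < g2 f"
    using order_tendstoD(1) by (metis eventually_conj)
  then obtain b where "0 < b" and b: "\<And>f. 0 < f \<Longrightarrow> f < b \<Longrightarrow> 0 < g1 f \<and> 0 < g2 f"
    unfolding eventually_at_right_field by auto
  then have "0 < g1 (b / 2)" "0 < g2 (b / 2)"
    by simp_all
  then have "b / 2 \<in> idle_forwards"
    using \<open>0 < b\<close> unfolding idle_forwards_def g1_def g2_def mem_Collect_eq by (intro conjI; linarith)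
  then show ?thesis
    using \<open>0 < b\<close> by (intro exI[of _ "b / 2"]) simp
qed

lemma idle_eq_exists_iff: "(\<exists>f x. idle_eq f x) \<longleftrightarrow> aL \<le> zeta1"
proof (cases "aL \<le> (real M + 1) * \<Delta>C")
  case True
  have "0 \<le> real M * real N * \<Delta>C" "0 \<le> real M * real N * k + 2 * real M * sqrt (real N * k * \<Delta>C)"
    using \<Delta>C_pos k_pos by simp_all
  then have "(real M + 1) * \<Delta>C \<le> zeta1"
    by (simp add: zeta1_def)
  then have "aL \<le> zeta1"
    using True by linarith
  moreover have "\<exists>f x. idle_eq f x"
    using idle_eq_if_small[OF True] by blast
  ultimately show ?thesis
    by blast
next
  case False
  then have large: "(real M + 1) * \<Delta>C < aL"
    by simp
  have "(\<exists>f x. idle_eq f x) \<longleftrightarrow> (\<exists>f. f \<in> idle_forwards)"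
  proof
    assume "\<exists>f x. idle_eq f x"
    then obtain f x where "idle_eq f x"
      by blast
    then show "\<exists>f. f \<in> idle_forwards"
      using idle_eq_iff_large[OF large, THEN iffD1] by blast
  next
    assume "\<exists>f. f \<in> idle_forwards"
    then obtain f where "f \<in> idle_forwards" ..
    then have "idle_eq f ((aF + f) / M)"
      using leaders_pos by (intro idle_eq_iff_large[OF large, THEN iffD2]) simp
    then show "\<exists>f x. idle_eq f x"
      by blast
  qed
  also have "\<dots> \<longleftrightarrow> 0 \<in> idle_forwards"
  proof
    assume "\<exists>f. f \<in> idle_forwards"
    then obtain f where "f \<in> idle_forwards" ..
    moreover have "0 \<le> f"
      using \<open>f \<in> idle_forwards\<close> by (simp add: idle_forwards_def)
    ultimately show "0 \<in> idle_forwards"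
      using idle_forwards_lower[of f 0] by simp
  qed auto
  finally show ?thesis
    by (simp add: zero_mem_idle_forwards_iff)
qed

lemma idle_eq_large:
  assumes large: "(real M + 1) * \<Delta>C < aL"
  shows "\<exists>fbar. (\<forall>f x. idle_eq f x \<longleftrightarrow> 0 \<le> x \<and> x = (aF + f) / M \<and> 0 \<le> f \<and> f \<le> fbar)
    \<and> (aL < zeta1 \<longrightarrow> 0 < fbar)"
proof -
  have "bdd_above idle_forwards"
    using idle_forwards_less[OF large] by (intro bdd_aboveI[of _ \<Delta>C]) (auto intro: less_imp_le)
  moreover have "\<And>f. f \<in> idle_forwards \<Longrightarrow> 0 \<le> f"
    by (simp add: idle_forwards_def)
  ultimately obtain fbar where fbar: "\<And>f. f \<in> idle_forwards \<longleftrightarrow> 0 \<le> f \<and> f \<le> fbar"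
    using closed_lower_set_eq_interval[OF closed_idle_forwards] idle_forwards_lower by blast
  have "M * \<Delta>C < aF"
    using large by (simp add: aF_eq algebra_simps)
  moreover have "0 \<le> M * \<Delta>C"
    using \<Delta>C_pos by simp
  ultimately have "0 < aF"
    by simp
  have "idle_eq f x \<longleftrightarrow> 0 \<le> x \<and> x = (aF + f) / M \<and> 0 \<le> f \<and> f \<le> fbar" for f x
  proof -
    have "idle_eq f x \<longleftrightarrow> M * x = aF + f \<and> 0 \<le> f \<and> f \<le> fbar"
      using idle_eq_iff_large[OF large] fbar by simp
    moreover have "M * x = aF + f \<longleftrightarrow> x = (aF + f) / M"
      using leaders_pos by (simp add: eq_divide_eq mult.commute)
    moreover have "0 \<le> (aF + f) / M" if "0 \<le> f"
      using that \<open>0 < aF\<close> by simp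
    ultimately show ?thesis
      by auto
  qed
  moreover have "0 < fbar" if small: "aL < zeta1"
  proof -
    obtain f where "0 < f" "f \<in> idle_forwards"
      using idle_forwards_pos[OF small] by blast
    then show ?thesis
      using fbar[of f] by simp
  qed
  ultimately show ?thesis
    by blast
qed

end

theorem lemma5:
  fixes \<alpha> \<beta> C c k :: real and M N :: nat
  assumes "M \<ge> 1" and "N \<ge> 2" and "\<alpha> > 0" and "\<beta> > 0"
    and "C > 0" and "c \<ge> C" and "k > 0"
    and "(c - C) / \<beta> > 0"
  defines "\<alpha>x \<equiv> (\<alpha> - C) / \<beta>" and "dC \<equiv> (c - C) / \<beta>"
  defines "Q \<equiv> symQ \<alpha> \<beta> C c k M N"
  defines "\<zeta>1 \<equiv> (real M + 1) * dC
             + min (real M * real N * dC)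
                   (real M * real N * k + 2 * real M * sqrt (real N * k * dC))"
  shows "((\<exists>(f, x) \<in> Q. \<forall>j<N. spot_eq \<alpha> \<beta> c k M N (\<lambda>_. f) (\<lambda>_. x) j = 0)
            \<longleftrightarrow> \<alpha>x \<le> \<zeta>1)
       \<and> (\<alpha>x > (real M + 1) * dC \<longrightarrow>
           (\<exists>fbar::real.
              let S = {(f, x). 0 \<le> x \<and> x = (\<alpha>x - (dC - f)) / real M \<and> 0 \<le> f \<and> f \<le> fbar}
              in (\<forall>(f, x) \<in> Q.
                    (\<forall>j<N. spot_eq \<alpha> \<beta> c k M N (\<lambda>_. f) (\<lambda>_. x) j = 0) \<longleftrightarrow> (f, x) \<in> S)
                 \<and> S \<subseteq> Q
                 \<and> (\<alpha>x < \<zeta>1 \<longrightarrow> fbar > 0)))"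
proof -
  interpret stackelberg_market \<alpha> \<beta> C c k M N
    using assms(1,2,4,7,8) by unfold_locales (simp_all add: zero_less_divide_iff)
  have params: "\<alpha>x = aL" "dC = \<Delta>C" "\<zeta>1 = zeta1"
    by (simp_all add: \<alpha>x_def aL_def dC_def \<Delta>C_def \<zeta>1_def zeta1_def)
  have idle: "(f, x) \<in> Q \<and> (\<forall>j<N. spot_eq \<alpha> \<beta> c k M N (\<lambda>_. f) (\<lambda>_. x) j = 0) \<longleftrightarrow> idle_eq f x"
    for f x
    by (simp add: Q_def idle_eq_def)
  show ?thesis
  proof (intro conjI impI)
    show "(\<exists>(f, x) \<in> Q. \<forall>j<N. spot_eq \<alpha> \<beta> c k M N (\<lambda>_. f) (\<lambda>_. x) j = 0) \<longleftrightarrow> \<alpha>x \<le> \<zeta>1"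
      unfolding params idle_eq_exists_iff[symmetric] idle[symmetric] by auto
  next
    assume "(real M + 1) * dC < \<alpha>x"
    then obtain fbar where fbar: "\<And>f x. idle_eq f x \<longleftrightarrow> 0 \<le> x \<and> x = (aF + f) / M \<and> 0 \<le> f \<and> f \<le> fbar"
      and "aL < zeta1 \<longrightarrow> 0 < fbar"
      using idle_eq_large by (auto simp: params)
    define S where "S = {(f, x). 0 \<le> x \<and> x = (\<alpha>x - (dC - f)) / real M \<and> 0 \<le> f \<and> f \<le> fbar}"
    have S_iff: "(f, x) \<in> S \<longleftrightarrow> idle_eq f x" for f x
      by (simp add: S_def fbar params aF_eq algebra_simps)
    show "\<exists>fbar::real.
              let S = {(f, x). 0 \<le> x \<and> x = (\<alpha>x - (dC - f)) / real M \<and> 0 \<le> f \<and> f \<le> fbar}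
              in (\<forall>(f, x) \<in> Q.
                    (\<forall>j<N. spot_eq \<alpha> \<beta> c k M N (\<lambda>_. f) (\<lambda>_. x) j = 0) \<longleftrightarrow> (f, x) \<in> S)
                 \<and> S \<subseteq> Q
                 \<and> (\<alpha>x < \<zeta>1 \<longrightarrow> fbar > 0)"
      using S_iff \<open>aL < zeta1 \<longrightarrow> 0 < fbar\<close>
      by (intro exI[of _ fbar], unfold Let_def S_def[symmetric]) (auto simp: params idle[symmetric])
  qed
qed

end
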